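(* Let $\mathfrak g=\mathfrak k\oplus\mathfrak m$ be a Pauli-spanned Cartan decomposition and let $b_1,\dots,b_d\in\tilde{\mathfrak m}$ be pairwise commuting Pauli strings (spanning an Abelian subalgebra $\mathfrak b\subseteq\mathfrak m$) all lying in the same connected component of the frustration graph of $\mathfrak g$. If for some $2\le r\le d$ both $\tilde{\mathfrak k}^{r-1}_{1\dots r-2}$ and $\tilde{\mathfrak k}^r_{1\dots r-1}$ are non-empty, then $|\tilde{\mathfrak k}^{r-1}_{1\dots r-2}|>|\tilde{\mathfrak k}^r_{1\dots r-1}|$.
   Context: Pauli strings on $n$ qubits are tensor products of $I,X,Y,Z$, not all identity; two Pauli strings either commute or anticommute. A Pauli-spanned Cartan decomposition is $\mathfrak g=\mathfrak k\oplus\mathfrak m\subseteq\mathfrak{su}(2^n)$ with $\mathfrak k=\mathrm{span}_{i\mathbb R}\tilde{\mathfrak k}$, $\mathfrak m=\mathrm{span}_{i\mathbb R}\tilde{\mathfrak m}$, $\mathfrak g=\mathrm{span}_{i\mathbb R}\tilde{\mathfrak g}$ with $\tilde{\mathfrak g}=\tilde{\mathfrak k}\sqcup\tilde{\mathfrak m}$ the set of all Pauli strings (up to phase) $\sigma$ with $i\sigma\in\mathfrak g$, and $[\mathfrak k,\mathfrak k]\subseteq\mathfrak k$, $[\mathfrak m,\mathfrak m]\subseteq\mathfrak k$, $[\mathfrak k,\mathfrak m]\subseteq\mathfrak m$. The frustration graph of $\mathfrak g$ has vertex set $\tilde{\mathfrak g}$, with edges between anticommuting pairs. For disjoint index lists,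 $\tilde{\mathfrak k}^{i_1i_2\dots}_{j_1j_2\dots}$ is the set of $k\in\tilde{\mathfrak k}$ anticommuting with every $b_{i_p}$ and commuting with every $b_{j_q}$ (no condition on other indices). *)

theory Defs
  imports Main
begin

text \<open>Single-qubit Pauli operators (up to phase).\<close>
datatype pauli = PI | PX | PY | PZ

definition pauli_string :: "nat \<Rightarrow> pauli list \<Rightarrow> bool" where
  "pauli_string n p \<longleftrightarrow> length p = n \<and> (\<exists>i<n. p ! i \<noteq> PI)"

definition anticommute :: "pauli list \<Rightarrow> pauli list \<Rightarrow> bool" where
  "anticommute p q \<longleftrightarrow>
     odd (card {i. i < length p \<and> p ! i \<noteq> PI \<and> q ! i \<noteq> PI \<and> p ! i \<noteq> q ! i})"

fun pmul1 :: "pauli \<Rightarrow> pauli \<Rightarrow> pauli" where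
  "pmul1 PI b = b"
| "pmul1 a PI = a"
| "pmul1 PX PX = PI" | "pmul1 PY PY = PI" | "pmul1 PZ PZ = PI"
| "pmul1 PX PY = PZ" | "pmul1 PY PX = PZ"
| "pmul1 PY PZ = PX" | "pmul1 PZ PY = PX"
| "pmul1 PX PZ = PY" | "pmul1 PZ PX = PY"

text \<open>For anticommuting \<sigma>,\<tau> the commutator [i\<sigma>, i\<tau>] is a nonzero multiple of
  i times this Pauli string; for commuting ones it is 0.\<close>
definition pmul :: "pauli list \<Rightarrow> pauli list \<Rightarrow> pauli list" where
  "pmul p q = map2 pmul1 p q"

text \<open>Pauli-spanned Cartan decomposition on n qubits, given by the disjoint sets
  K (= k tilde) and M (= m tilde) of Pauli strings; the commutation relations
  [k,k] \<subseteq> k, [m,m] \<subseteq> k, [k,m] \<subseteq> m are written out on the spanning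
  Pauli strings.\<close>
definition pauli_cartan :: "nat \<Rightarrow> pauli list set \<Rightarrow> pauli list set \<Rightarrow> bool" where
  "pauli_cartan n K M \<longleftrightarrow>
     (\<forall>p\<in>K \<union> M. pauli_string n p) \<and> K \<inter> M = {} \<and>
     (\<forall>a\<in>K. \<forall>b\<in>K. anticommute a b \<longrightarrow> pmul a b \<in> K) \<and>
     (\<forall>a\<in>M. \<forall>b\<in>M. anticommute a b \<longrightarrow> pmul a b \<in> K) \<and>
     (\<forall>a\<in>K. \<forall>b\<in>M. anticommute a b \<longrightarrow> pmul a b \<in> M)"

definition frust_edge :: "pauli list set \<Rightarrow> pauli list \<Rightarrow> pauli list \<Rightarrow> bool" where
  "frust_edge G p q \<longleftrightarrow> p \<in> G \<and> q \<in> G \<and> anticommute p q"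

definition same_component :: "pauli list set \<Rightarrow> pauli list \<Rightarrow> pauli list \<Rightarrow> bool" where
  "same_component G p q \<longleftrightarrow> p \<in> G \<and> q \<in> G \<and> (frust_edge G)\<^sup>*\<^sup>* p q"

text \<open>k tilde with upper indices A and lower indices C (w.r.t. b).\<close>
definition kset :: "pauli list set \<Rightarrow> (nat \<Rightarrow> pauli list) \<Rightarrow> nat set \<Rightarrow> nat set \<Rightarrow> pauli list set" where
  "kset K b A C = {k \<in> K. (\<forall>i\<in>A. anticommute k (b i)) \<and> (\<forall>j\<in>C. \<not> anticommute k (b j))}"

end

theory Submission
  imports Defs
begin

text \<open>Products of anticommuting Pauli strings of \<open>\<frak>g\<close> stay in \<open>\<frak>g\<close>, so two strings in the
  same component of the frustration graph are at distance at most two. From a common neighbour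
  of \<open>u = b (r - 1)\<close> and \<open>v = b r\<close>, and from elements of the two non-empty sets, one builds
  \<open>x \<in> \<frak>k\<close> anticommuting with \<open>u\<close> and \<open>v\<close> and commuting with \<open>b 1, \<dots>, b (r - 2)\<close>.
  The Clifford rotations by \<open>x\<close> and then by \<open>x v u \<in> \<frak>k\<close> preserve \<open>\<frak>k\<close> and commutation,
  exchange \<open>u\<close> and \<open>v\<close> and fix \<open>b 1, \<dots>, b (r - 2)\<close>; so they map the smaller set
  injectively into the larger one, missing \<open>x\<close>.\<close>

definition anticommute1 :: "pauli \<Rightarrow> pauli \<Rightarrow> bool" where
  "anticommute1 a b \<longleftrightarrow> a \<noteq> PI \<and> b \<noteq> PI \<and> a \<noteq> b"

lemma anticommute_iff_odd_card:
  "anticommute p q \<longleftrightarrow> odd (card {i. i < length p \<and> anticommute1 (p ! i) (q ! i)})"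
  unfolding anticommute_def anticommute1_def by simp

lemma anticommute1_commute: "anticommute1 a b \<longleftrightarrow> anticommute1 b a"
  by (auto simp: anticommute1_def)

lemma anticommute1_pmul1_left:
  "anticommute1 (pmul1 a b) c \<longleftrightarrow> anticommute1 a c \<noteq> anticommute1 b c"
  by (cases a; cases b; cases c) (auto simp: anticommute1_def)

lemma odd_card_sym_diff:
  assumes "finite A" "finite B"
  shows "odd (card (sym_diff A B)) \<longleftrightarrow> odd (card A) \<noteq> odd (card B)"
proof -
  have "card (sym_diff A B) = card (A - B) + card (B - A)"
    by (rule card_Un_disjoint) (use assms in auto)
  moreover have "card A = card (A - B) + card (A \<inter> B)"
    using assms card_Diff_subset_Int[of A B] card_mono[of A "A \<inter> B"] by auto
  moreover have "card B = card (B - A) + card (A \<inter> B)"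
    using assms card_Diff_subset_Int[of B A] card_mono[of B "A \<inter> B"] by (auto simp: Int_commute)
  ultimately show ?thesis by auto
qed

lemma length_pmul [simp]: "length (pmul p q) = min (length p) (length q)"
  by (simp add: pmul_def)

lemma nth_pmul [simp]: "i < length p \<Longrightarrow> i < length q \<Longrightarrow> pmul p q ! i = pmul1 (p ! i) (q ! i)"
  by (simp add: pmul_def)

lemma pmul_commute: "pmul p q = pmul q p"
proof (rule nth_equalityI)
  fix i assume "i < length (pmul p q)"
  then show "pmul p q ! i = pmul q p ! i" by (cases "p ! i"; cases "q ! i") simp_all
qed simp

lemma pmul_assoc: "pmul (pmul p q) s = pmul p (pmul q s)"
proof (rule nth_equalityI)
  fix i assume "i < length (pmul (pmul p q) s)"
  then show "pmul (pmul p q) s ! i = pmul p (pmul q s) ! i"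
    by (cases "p ! i"; cases "q ! i"; cases "s ! i") simp_all
qed simp

lemma pmul_cancel_left:
  assumes "length p = length q"
  shows "pmul p (pmul p q) = q"
proof (rule nth_equalityI)
  fix i assume "i < length (pmul p (pmul p q))"
  then show "pmul p (pmul p q) ! i = q ! i" by (cases "p ! i"; cases "q ! i") simp_all
qed (simp add: assms)

lemma anticommute_commute: "length p = length q \<Longrightarrow> anticommute p q \<longleftrightarrow> anticommute q p"
  unfolding anticommute_iff_odd_card by (simp add: anticommute1_commute)

lemma not_anticommute_self [simp]: "\<not> anticommute p p"
  unfolding anticommute_iff_odd_card by (simp add: anticommute1_def)

lemma anticommute_pmul_left:
  assumes "length p = length s" "length q = length s"
  shows "anticommute (pmul p q) s \<longleftrightarrow> anticommute p s \<noteq> anticommute q s"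
proof -
  let ?A = "{i. i < length s \<and> anticommute1 (p ! i) (s ! i)}"
  let ?B = "{i. i < length s \<and> anticommute1 (q ! i) (s ! i)}"
  have "{i. i < length (pmul p q) \<and> anticommute1 (pmul p q ! i) (s ! i)} = sym_diff ?A ?B"
    using assms by (auto simp: anticommute1_pmul1_left)
  then show ?thesis
    using assms odd_card_sym_diff[of ?A ?B] by (simp add: anticommute_iff_odd_card)
qed

lemma anticommute_pmul_right:
  assumes "length p = length s" "length q = length s"
  shows "anticommute s (pmul p q) \<longleftrightarrow> anticommute s p \<noteq> anticommute s q"
  using anticommute_pmul_left[OF assms] assms by (metis anticommute_commute length_pmul min.idem)

locale pauli_product_closed =
  fixes n :: nat and G :: "pauli list set"
  assumes length_eq: "p \<in> G \<Longrightarrow> length p = n"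
    and pmul_closed: "p \<in> G \<Longrightarrow> q \<in> G \<Longrightarrow> anticommute p q \<Longrightarrow> pmul p q \<in> G"
begin

text \<open>Closure under products of anticommuting pairs means that the frustration graph on \<open>G\<close>
  has diameter at most 2 on each component: if \<open>u \<sim> y \<sim> x \<sim> z\<close> and
  neither \<open>u \<sim> x\<close> nor \<open>y \<sim> z\<close>, then \<open>y x\<close> is a common neighbour of \<open>u\<close> and \<open>z\<close>.\<close>

lemma frust_path_common_neighbour:
  assumes path: "(frust_edge G)\<^sup>*\<^sup>* u z" and "u \<in> G"
  shows "z = u \<or> anticommute u z \<or> (\<exists>y\<in>G. anticommute u y \<and> anticommute y z)"
  using path
proof (induction rule: rtranclp_induct)
  case (step x z)
  then have "x \<in> G" "z \<in> G" and xz: "anticommute x z"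
    by (auto simp: frust_edge_def)
  from step.IH show ?case
  proof (elim disjE)
    assume "x = u"
    then show ?thesis using xz by simp
  next
    assume "anticommute u x"
    then show ?thesis using \<open>x \<in> G\<close> xz by blast
  next
    assume "\<exists>y\<in>G. anticommute u y \<and> anticommute y x"
    then obtain y where "y \<in> G" "anticommute u y" "anticommute y x" by blast
    moreover have "length y = n" "length x = n" "length u = n" "length z = n"
      using \<open>y \<in> G\<close> \<open>x \<in> G\<close> \<open>u \<in> G\<close> \<open>z \<in> G\<close> length_eq by auto
    moreover have "pmul y x \<in> G"
      using \<open>y \<in> G\<close> \<open>x \<in> G\<close> \<open>anticommute y x\<close> pmul_closed by blast
    ultimately show ?thesis
      using \<open>x \<in> G\<close> xz by (metis anticommute_pmul_left anticommute_pmul_right)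
  qed
qed simp

text \<open>The witness is \<open>x = (y\<^sub>1 a c) (y\<^sub>2 k)\<close> with \<open>y\<^sub>1 \<in> {y, y u}\<close> chosen to
  anticommute with \<open>a\<close> and \<open>y\<^sub>2 \<in> {y, y v}\<close> chosen to anticommute with \<open>k\<close>; the two
  factors \<open>y\<close> cancel, so \<open>x\<close> is a product of \<open>a, k, u, v, c\<close>.\<close>

lemma common_neighbour_from_products:
  assumes G: "y \<in> G" "a \<in> G" "k \<in> G" "u \<in> G" "v \<in> G" "c \<in> G"
    and ac: "anticommute y u" "anticommute y v" "anticommute y c" "anticommute a u" "anticommute k v"
    and com: "\<not> anticommute a v" "\<not> anticommute a k" "\<not> anticommute a c" "\<not> anticommute k u"
      "\<not> anticommute k c" "\<not> anticommute u v" "\<not> anticommute u c" "\<not> anticommute v c"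
  obtains x where "x \<in> G" "anticommute x u" "anticommute x v"
    "\<And>w. length w = n \<Longrightarrow> \<not> anticommute a w \<Longrightarrow> \<not> anticommute k w \<Longrightarrow>
      \<not> anticommute u w \<Longrightarrow> \<not> anticommute v w \<Longrightarrow> \<not> anticommute c w \<Longrightarrow> \<not> anticommute x w"
proof -
  have l: "length y = n" "length a = n" "length k = n" "length u = n" "length v = n" "length c = n"
    using G length_eq by auto
  have flipped: "anticommute a y = anticommute y a" "anticommute k y = anticommute y k"
    "anticommute c y" "anticommute u y" "anticommute v y" "anticommute u a" "\<not> anticommute v a"
    "\<not> anticommute k a" "\<not> anticommute c a" "anticommute v k" "\<not> anticommute u k"
    "\<not> anticommute c k" "\<not> anticommute v u" "\<not> anticommute c u" "\<not> anticommute c v"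
    using ac com l anticommute_commute by metis+
  note simps = anticommute_pmul_left anticommute_pmul_right l
  define y\<^sub>1 where "y\<^sub>1 = (if anticommute y a then y else pmul y u)"
  define y\<^sub>2 where "y\<^sub>2 = (if anticommute y k then y else pmul y v)"
  have "y\<^sub>1 \<in> G" "y\<^sub>2 \<in> G"
    unfolding y\<^sub>1_def y\<^sub>2_def using G ac pmul_closed by auto
  have "pmul y\<^sub>1 a \<in> G"
    using \<open>y\<^sub>1 \<in> G\<close> G pmul_closed unfolding y\<^sub>1_def using ac com flipped by (auto simp: simps)
  then have z\<^sub>1: "pmul (pmul y\<^sub>1 a) c \<in> G"
    using G pmul_closed unfolding y\<^sub>1_def using ac com flipped by (auto simp: simps)
  have z\<^sub>2: "pmul y\<^sub>2 k \<in> G"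
    using \<open>y\<^sub>2 \<in> G\<close> G pmul_closed unfolding y\<^sub>2_def using ac com flipped by (auto simp: simps)
  have "anticommute (pmul (pmul y\<^sub>1 a) c) (pmul y\<^sub>2 k)"
    unfolding y\<^sub>1_def y\<^sub>2_def using ac com flipped by (auto simp: simps)
  then have "pmul (pmul (pmul y\<^sub>1 a) c) (pmul y\<^sub>2 k) \<in> G"
    using z\<^sub>1 z\<^sub>2 pmul_closed by blast
  then show thesis
  proof (rule that)
    define x where "x = pmul (pmul (pmul y\<^sub>1 a) c) (pmul y\<^sub>2 k)"
    show "anticommute x u" "anticommute x v"
      unfolding x_def y\<^sub>1_def y\<^sub>2_def using ac com flipped by (auto simp: simps)
    show "\<not> anticommute x w" if "length w = n" "\<not> anticommute a w" "\<not> anticommute k w"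
      "\<not> anticommute u w" "\<not> anticommute v w" "\<not> anticommute c w" for w
      using that unfolding x_def y\<^sub>1_def y\<^sub>2_def using ac com flipped by (auto simp: simps)
  qed
qed

lemma common_neighbour_in_centralizer:
  assumes "u \<in> G" "v \<in> G" "\<not> anticommute u v"
    and "y \<in> G" "anticommute y u" "anticommute y v"
    and "a \<in> G" "anticommute a u" "k \<in> G" "anticommute k v" "\<not> anticommute k u"
    and "C \<subseteq> G"
    and C_centralizes:
      "\<forall>c\<in>C. \<not> anticommute a c \<and> \<not> anticommute k c \<and> \<not> anticommute u c \<and> \<not> anticommute v c"
    and C_commuting: "\<forall>c\<in>C. \<forall>c'\<in>C. \<not> anticommute c c'"
  obtains x where "x \<in> G" "anticommute x u" "anticommute x v" "\<forall>c\<in>C. \<not> anticommute x c"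
proof -
  have l: "length u = n" "length v = n" "length a = n" "length k = n" "\<And>c. c \<in> C \<Longrightarrow> length c = n"
    using assms length_eq by auto
  consider "anticommute a v" | "\<not> anticommute a v" "anticommute a k" | "\<forall>c\<in>C. \<not> anticommute y c"
    | c where "\<not> anticommute a v" "\<not> anticommute a k" "c \<in> C" "anticommute y c"
    by blast
  then show thesis
  proof cases
    case 1
    then show thesis using that assms by blast
  next
    case 2
    have "pmul a k \<in> G"
      using assms 2 pmul_closed by blast
    moreover have "\<forall>c\<in>C. \<not> anticommute (pmul a k) c"
      using C_centralizes l by (simp add: anticommute_pmul_left)
    ultimately show thesis
      using that 2 assms l by (simp add: anticommute_pmul_left)
  next
    case 3
    then show thesis using that assms by blast
  next
    case (4 c)
    obtain x where "x \<in> G" "anticommute x u" "anticommute x v"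
      and x_commutes: "\<And>w. length w = n \<Longrightarrow> \<not> anticommute a w \<Longrightarrow> \<not> anticommute k w \<Longrightarrow>
        \<not> anticommute u w \<Longrightarrow> \<not> anticommute v w \<Longrightarrow> \<not> anticommute c w \<Longrightarrow> \<not> anticommute x w"
      using common_neighbour_from_products[of y a k u v c] 4 assms by blast
    moreover have "\<forall>c'\<in>C. \<not> anticommute x c'"
      using x_commutes l C_centralizes C_commuting 4 by (metis anticommute_commute)
    ultimately show thesis using that by blast
  qed
qed

end

lemma pauli_cartan_product_closed:
  assumes "pauli_cartan n K M"
  shows "pauli_product_closed n (K \<union> M)"
proof
  show "length p = n" if "p \<in> K \<union> M" for p
    using assms that unfolding pauli_cartan_def pauli_string_def by blast
  show "pmul p q \<in> K \<union> M" if "p \<in> K \<union> M" "q \<in> K \<union> M" "anticommute p q" for p q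
  proof -
    have "anticommute q p"
      using that \<open>\<And>p. p \<in> K \<union> M \<Longrightarrow> length p = n\<close> anticommute_commute by metis
    then show ?thesis
      using assms that unfolding pauli_cartan_def by (metis Un_iff pmul_commute)
  qed
qed

lemma pauli_cartan_product_closed_k:
  assumes "pauli_cartan n K M"
  shows "pauli_product_closed n K"
  using assms unfolding pauli_cartan_def pauli_string_def by unfold_locales blast+

text \<open>Up to phase, the conjugate of \<open>p\<close> by the Clifford rotation \<open>exp (i \<pi>/4 c)\<close>.\<close>

definition pauli_rotation :: "pauli list \<Rightarrow> pauli list \<Rightarrow> pauli list" where
  "pauli_rotation c p = (if anticommute c p then pmul c p else p)"

lemma length_pauli_rotation [simp]: "length c = length p \<Longrightarrow> length (pauli_rotation c p) = length p"
  by (simp add: pauli_rotation_def)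

lemma anticommute_pauli_rotation:
  assumes "length c = n" "length p = n" "length q = n"
  shows "anticommute (pauli_rotation c p) (pauli_rotation c q) \<longleftrightarrow> anticommute p q"
proof -
  have "anticommute p c = anticommute c p" "anticommute q c = anticommute c q"
    "anticommute q p = anticommute p q"
    using anticommute_commute assms by metis+
  then show ?thesis
    unfolding pauli_rotation_def using assms by (auto simp: anticommute_pmul_left anticommute_pmul_right)
qed

lemma pauli_rotation_involutive:
  assumes "length c = length p"
  shows "pauli_rotation c (pauli_rotation c p) = p"
  using assms by (simp add: pauli_rotation_def anticommute_pmul_right pmul_cancel_left)

lemma (in pauli_product_closed) pauli_rotation_closed:
  "c \<in> G \<Longrightarrow> p \<in> G \<Longrightarrow> pauli_rotation c p \<in> G"
  by (simp add: pauli_rotation_def pmul_closed)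

text \<open>The rotation by \<open>x\<close> followed by the rotation by \<open>x v u \<in> \<frak>k\<close> maps \<open>u \<mapsto> x u \<mapsto> v\<close>
  and \<open>v \<mapsto> x v \<mapsto> u\<close>, while fixing everything that commutes with \<open>x\<close>, \<open>u\<close> and \<open>v\<close>.\<close>

lemma pauli_cartan_swap:
  assumes cartan: "pauli_cartan n K M"
    and "x \<in> K" "u \<in> M" "v \<in> M" "anticommute x u" "anticommute x v" "\<not> anticommute u v"
  obtains \<phi> where
    "\<And>p q. length p = n \<Longrightarrow> length q = n \<Longrightarrow> anticommute (\<phi> p) (\<phi> q) \<longleftrightarrow> anticommute p q"
    "inj_on \<phi> {p. length p = n}" "\<phi> ` K \<subseteq> K" "\<phi> u = v" "\<phi> v = u"
    "\<And>p. length p = n \<Longrightarrow> \<not> anticommute x p \<Longrightarrow> \<not> anticommute u p \<Longrightarrow> \<not> anticommute v p \<Longrightarrow>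
      \<phi> p = p"
proof -
  interpret KM: pauli_product_closed n "K \<union> M"
    using cartan by (rule pauli_cartan_product_closed)
  interpret K: pauli_product_closed n K
    using cartan by (rule pauli_cartan_product_closed_k)
  have l: "length x = n" "length u = n" "length v = n"
    using assms KM.length_eq by auto
  have "anticommute v x" "anticommute u x" "\<not> anticommute v u"
    using assms l anticommute_commute by metis+
  note simps = anticommute_pmul_left anticommute_pmul_right l this assms
  define w where "w = pmul (pmul x v) u"
  have "pmul x v \<in> M"
    using cartan assms unfolding pauli_cartan_def by blast
  then have "w \<in> K"
    using cartan assms unfolding pauli_cartan_def w_def by (auto simp: simps)
  have lw: "length w = n"
    using K.length_eq \<open>w \<in> K\<close> by blast
  define \<phi> where "\<phi> p = pauli_rotation w (pauli_rotation x p)" for p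
  show thesis
  proof (rule that)
    show "anticommute (\<phi> p) (\<phi> q) \<longleftrightarrow> anticommute p q" if "length p = n" "length q = n" for p q
      unfolding \<phi>_def using that l lw by (simp add: anticommute_pauli_rotation)
    show "inj_on \<phi> {p. length p = n}"
      by (rule inj_on_inverseI[where g = "\<lambda>p. pauli_rotation x (pauli_rotation w p)"])
        (simp add: \<phi>_def pauli_rotation_involutive l lw)
    show "\<phi> ` K \<subseteq> K"
      unfolding \<phi>_def using \<open>x \<in> K\<close> \<open>w \<in> K\<close> by (auto intro!: K.pauli_rotation_closed)
    have "pmul w (pmul x u) = pmul (pmul x u) (pmul (pmul x u) v)"
      unfolding w_def by (metis pmul_assoc pmul_commute)
    also have "\<dots> = v"
      using l by (simp add: pmul_cancel_left)
    finally show "\<phi> u = v"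
      unfolding \<phi>_def pauli_rotation_def w_def by (simp add: simps)
    have "pmul w (pmul x v) = pmul (pmul x v) (pmul (pmul x v) u)"
      unfolding w_def by (rule pmul_commute)
    also have "\<dots> = u"
      using l by (simp add: pmul_cancel_left)
    finally show "\<phi> v = u"
      unfolding \<phi>_def pauli_rotation_def w_def by (simp add: simps)
    show "\<phi> p = p" if "length p = n" "\<not> anticommute x p" "\<not> anticommute u p" "\<not> anticommute v p" for p
      using that unfolding \<phi>_def pauli_rotation_def w_def by (simp add: simps)
  qed
qed

lemma pauli_cartan_common_neighbour_in_k:
  assumes cartan: "pauli_cartan n K M"
    and "u \<in> M" "v \<in> M" "u \<noteq> v" "\<not> anticommute u v" "same_component (K \<union> M) u v"
    and "a \<in> K" "anticommute a u" "k \<in> K" "anticommute k v" "\<not> anticommute k u"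
    and "C \<subseteq> M"
    and C_centralizes:
      "\<forall>c\<in>C. \<not> anticommute a c \<and> \<not> anticommute k c \<and> \<not> anticommute u c \<and> \<not> anticommute v c"
    and C_commuting: "\<forall>c\<in>C. \<forall>c'\<in>C. \<not> anticommute c c'"
  obtains x where "x \<in> K" "anticommute x u" "anticommute x v" "\<forall>c\<in>C. \<not> anticommute x c"
proof -
  interpret pauli_product_closed n "K \<union> M"
    using cartan by (rule pauli_cartan_product_closed)
  have "(frust_edge (K \<union> M))\<^sup>*\<^sup>* u v"
    using \<open>same_component (K \<union> M) u v\<close> unfolding same_component_def by blast
  then obtain y where y: "y \<in> K \<union> M" "anticommute u y" "anticommute y v"
    using frust_path_common_neighbour \<open>u \<in> M\<close> \<open>u \<noteq> v\<close> \<open>\<not> anticommute u v\<close> by blast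
  have "anticommute y u"
    using y \<open>u \<in> M\<close> length_eq anticommute_commute by (metis UnCI)
  obtain x where x: "x \<in> K \<union> M" "anticommute x u" "anticommute x v" "\<forall>c\<in>C. \<not> anticommute x c"
  proof (rule common_neighbour_in_centralizer[of u v y a k C])
  qed (use assms y \<open>anticommute y u\<close> in auto)
  show thesis
  proof (cases "x \<in> K")
    case True
    then show thesis using that x by blast
  next
    case False
    then have "pmul x u \<in> K"
      using x cartan \<open>u \<in> M\<close> unfolding pauli_cartan_def by blast
    moreover have "length x = n" "length u = n" "length v = n" "\<And>c. c \<in> C \<Longrightarrow> length c = n"
      using x assms length_eq by auto
    ultimately show thesis
      using that[of "pmul x u"] x assms by (simp add: anticommute_pmul_left)
  qed
qed

instance pauli :: finite
proof
  have "(UNIV :: pauli set) = {PI, PX, PY, PZ}"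
    by (auto intro: pauli.exhaust)
  then show "finite (UNIV :: pauli set)"
    by (metis finite.emptyI finite_insert)
qed

lemma finite_pauli_strings: "finite {p :: pauli list. length p = n}"
  using finite_lists_length_eq[OF finite_UNIV, of n] by simp

lemma pauli_cartan_card_less:
  assumes cartan: "pauli_cartan n K M"
    and "u \<in> M" "v \<in> M" "u \<noteq> v" "\<not> anticommute u v" "same_component (K \<union> M) u v"
    and "C \<subseteq> M"
    and C_commutes: "\<forall>c\<in>C. \<not> anticommute u c \<and> \<not> anticommute v c"
    and C_commuting: "\<forall>c\<in>C. \<forall>c'\<in>C. \<not> anticommute c c'"
    and "\<exists>a\<in>K. anticommute a u \<and> (\<forall>c\<in>C. \<not> anticommute a c)"
    and "\<exists>k\<in>K. anticommute k v \<and> \<not> anticommute k u \<and> (\<forall>c\<in>C. \<not> anticommute k c)"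
  shows "card {p \<in> K. anticommute p v \<and> \<not> anticommute p u \<and> (\<forall>c\<in>C. \<not> anticommute p c)}
    < card {p \<in> K. anticommute p u \<and> (\<forall>c\<in>C. \<not> anticommute p c)}"
    (is "card ?B < card ?A")
proof -
  interpret pauli_product_closed n "K \<union> M"
    using cartan by (rule pauli_cartan_product_closed)
  obtain a k where a: "a \<in> K" "anticommute a u" "\<forall>c\<in>C. \<not> anticommute a c"
    and k: "k \<in> K" "anticommute k v" "\<not> anticommute k u" "\<forall>c\<in>C. \<not> anticommute k c"
    using assms by blast
  have "\<forall>c\<in>C. \<not> anticommute a c \<and> \<not> anticommute k c \<and> \<not> anticommute u c \<and> \<not> anticommute v c"
    using a(3) k(4) C_commutes by blast
  then obtain x where x: "x \<in> K" "anticommute x u" "anticommute x v" "\<forall>c\<in>C. \<not> anticommute x c"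
    using pauli_cartan_common_neighbour_in_k[OF cartan \<open>u \<in> M\<close> \<open>v \<in> M\<close> \<open>u \<noteq> v\<close>
        \<open>\<not> anticommute u v\<close> \<open>same_component (K \<union> M) u v\<close> a(1,2) k(1-3) \<open>C \<subseteq> M\<close> _ C_commuting]
    by blast
  obtain \<phi> where \<phi>:
    "\<And>p q. length p = n \<Longrightarrow> length q = n \<Longrightarrow> anticommute (\<phi> p) (\<phi> q) \<longleftrightarrow> anticommute p q"
    "inj_on \<phi> {p. length p = n}" "\<phi> ` K \<subseteq> K" "\<phi> u = v" "\<phi> v = u"
    "\<And>p. length p = n \<Longrightarrow> \<not> anticommute x p \<Longrightarrow> \<not> anticommute u p \<Longrightarrow> \<not> anticommute v p \<Longrightarrow>
      \<phi> p = p"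
    using pauli_cartan_swap[OF cartan x(1) \<open>u \<in> M\<close> \<open>v \<in> M\<close> x(2,3) \<open>\<not> anticommute u v\<close>] by blast
  have lengths: "length u = n" "length v = n" "\<And>p. p \<in> K \<Longrightarrow> length p = n" "\<And>c. c \<in> C \<Longrightarrow> length c = n"
    using \<open>u \<in> M\<close> \<open>v \<in> M\<close> \<open>C \<subseteq> M\<close> length_eq by auto
  have fixed: "\<phi> c = c" if "c \<in> C" for c
    using \<phi>(6) lengths(4) that x(4) C_commutes by blast
  have "\<phi> ` ?B \<subseteq> ?A - {x}"
  proof
    fix q assume "q \<in> \<phi> ` ?B"
    then obtain p where p: "p \<in> K" "anticommute p v" "\<not> anticommute p u" "\<forall>c\<in>C. \<not> anticommute p c"
      and "q = \<phi> p" by blast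
    have "q \<in> K"
      using \<phi>(3) p(1) \<open>q = \<phi> p\<close> by blast
    moreover have "anticommute q u" "\<not> anticommute q v"
      using \<phi>(1)[of p v] \<phi>(1)[of p u] \<phi>(4,5) p lengths \<open>q = \<phi> p\<close> by simp_all
    moreover have "\<forall>c\<in>C. \<not> anticommute q c"
      using \<phi>(1)[of p] fixed p lengths \<open>q = \<phi> p\<close> by metis
    ultimately show "q \<in> ?A - {x}"
      using x(3) by auto
  qed
  moreover have "inj_on \<phi> ?B"
    using \<phi>(2) lengths(3) by (auto intro: inj_on_subset)
  moreover have "finite ?A"
    using lengths(3) by (auto intro: finite_subset[OF _ finite_pauli_strings])
  ultimately have "card ?B \<le> card (?A - {x})"
    by (intro card_inj_on_le) auto
  also have "\<dots> < card ?A"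
    using \<open>finite ?A\<close> x by (intro card_Diff1_less) auto
  finally show ?thesis .
qed

theorem lemmaC3:
  fixes n d r :: nat and K M :: "pauli list set" and b :: "nat \<Rightarrow> pauli list"
  assumes cartan: "pauli_cartan n K M"
    and b_in_M: "\<forall>i\<in>{1..d}. b i \<in> M"
    and b_distinct: "inj_on b {1..d}"
    and b_comm: "\<forall>i\<in>{1..d}. \<forall>j\<in>{1..d}. \<not> anticommute (b i) (b j)"
    and b_conn: "\<forall>i\<in>{1..d}. \<forall>j\<in>{1..d}. same_component (K \<union> M) (b i) (b j)"
    and r: "2 \<le> r" "r \<le> d"
    and ne1: "kset K b {r - 1} {1..r - 2} \<noteq> {}"
    and ne2: "kset K b {r} {1..r - 1} \<noteq> {}"
  shows "card (kset K b {r - 1} {1..r - 2}) > card (kset K b {r} {1..r - 1})"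
proof -
  define u v C where "u = b (r - 1)" and "v = b r" and "C = b ` {1..r - 2}"
  have idx: "r - 1 \<in> {1..d}" "r \<in> {1..d}" "{1..r - 2} \<subseteq> {1..d}" "r - 1 \<noteq> r"
    using r by auto
  have "{1..r - 1} = insert (r - 1) {1..r - 2}"
    using r by auto
  then have A: "kset K b {r - 1} {1..r - 2} = {p \<in> K. anticommute p u \<and> (\<forall>c\<in>C. \<not> anticommute p c)}"
    and B: "kset K b {r} {1..r - 1} =
      {p \<in> K. anticommute p v \<and> \<not> anticommute p u \<and> (\<forall>c\<in>C. \<not> anticommute p c)}"
    unfolding kset_def u_def v_def C_def by auto
  show ?thesis
    unfolding A B
  proof (rule pauli_cartan_card_less[OF cartan])
    show "u \<in> M" "v \<in> M" "C \<subseteq> M"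
      using b_in_M idx unfolding u_def v_def C_def by auto
    show "u \<noteq> v"
      unfolding u_def v_def using inj_on_contraD[OF b_distinct idx(4) idx(1,2)] .
    show "\<not> anticommute u v" "same_component (K \<union> M) u v"
      unfolding u_def v_def using b_comm b_conn idx(1,2) by blast+
    show "\<forall>c\<in>C. \<not> anticommute u c \<and> \<not> anticommute v c" "\<forall>c\<in>C. \<forall>c'\<in>C. \<not> anticommute c c'"
      unfolding u_def v_def C_def using b_comm idx(1-3) by (auto simp: subset_iff)
  qed (use ne1 ne2 A B in auto)
qed

end
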